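(* For every positive integer $n$, $$b^{2}_{3,4}(2n)\equiv b_{3,4}(n)\pmod 4.$$
   Context: For integers $r\ge1$ write $f_r=\prod_{j\ge1}(1-q^{rj})$. For coprime positive integers $\ell,m$ and a positive integer $k$, $b^{k}_{\ell,m}(n)$ denotes the number of $k$-colored partitions of $n$ into parts not divisible by $\ell$ or by $m$; equivalently $\sum_{n\ge0} b^{k}_{\ell,m}(n)q^n=\dfrac{f_\ell^k f_m^k}{f_1^k f_{\ell m}^k}$. Also $b_{\ell,m}(n)=b^{1}_{\ell,m}(n)$ is the number of (uncolored) partitions of $n$ into parts not divisible by $\ell$ or $m$, so $\sum_{n\ge0}b_{3,4}(n)q^n=\dfrac{f_3f_4}{f_1f_{12}}$ and $\sum_{n\ge0}b^2_{3,4}(n)q^n=\dfrac{f_3^2f_4^2}{f_1^2f_{12}^2}$. *)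

theory Defs
  imports Main "HOL-Library.Multiset"
begin

definition colored_parts_set :: "nat \<Rightarrow> nat \<Rightarrow> nat \<Rightarrow> nat \<Rightarrow> (nat \<times> nat) multiset set" where
  "colored_parts_set k l m n =
     {P. (\<forall>x \<in># P. 0 < fst x \<and> \<not> l dvd fst x \<and> \<not> m dvd fst x \<and> snd x < k)
         \<and> sum_mset (image_mset fst P) = n}"

definition b_col :: "nat \<Rightarrow> nat \<Rightarrow> nat \<Rightarrow> nat \<Rightarrow> nat" where
  "b_col k l m n = card (colored_parts_set k l m n)"

end

theory Submission
  imports Defs
begin

(* Read a 2-coloured partition as a pair (P, Q) of partitions and split off the common part
   D = P \<inter># Q.  The rests P - Q and Q - P have disjoint supports, and such pairs of total m
   correspond to a partition of m together with a subset of its distinct parts; hence there are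
   \<Sum> 2^(number of distinct parts) of them.  For m > 0 every partition with at least two distinct
   parts contributes 0 mod 4, so the count is 2 * #{allowed divisors of m} mod 4.  For parts not
   divisible by 3 or 4 the allowed divisors of an even m come in pairs a, 2a with a odd, so only
   the D with |D| = n survive mod 4 in b^2(2n), and there are b(n) of them. *)

definition partitions :: "nat set \<Rightarrow> nat \<Rightarrow> nat multiset set" where
  "partitions A n = {P. set_mset P \<subseteq> A \<and> sum_mset P = n}"

definition partition_pairs :: "nat set \<Rightarrow> nat \<Rightarrow> (nat multiset \<times> nat multiset) set" where
  "partition_pairs A n =
     {(P, Q). set_mset P \<subseteq> A \<and> set_mset Q \<subseteq> A \<and> sum_mset P + sum_mset Q = n}"

definition disjoint_partition_pairs :: "nat set \<Rightarrow> nat \<Rightarrow> (nat multiset \<times> nat multiset) set" where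
  "disjoint_partition_pairs A n =
     {(P, Q) \<in> partition_pairs A n. set_mset P \<inter> set_mset Q = {}}"

definition nondivisible_parts :: "nat \<Rightarrow> nat \<Rightarrow> nat set" where
  "nondivisible_parts l m = {j. 0 < j \<and> \<not> l dvd j \<and> \<not> m dvd j}"

lemma zero_notin_nondivisible_parts: "0 \<notin> nondivisible_parts l m"
  by (simp add: nondivisible_parts_def)

lemma image_mset_eq_self: "(\<And>x. x \<in># M \<Longrightarrow> f x = x) \<Longrightarrow> image_mset f M = M"
  using image_mset_cong[of M f id] by simp

lemma mod_add_dvd_left: "(d :: nat) dvd a \<Longrightarrow> (a + b) mod d = b mod d"
  by (metis add_0 dvd_eq_mod_eq_0 mod_add_left_eq)

lemma size_le_sum_mset: "0 \<notin># P \<Longrightarrow> size P \<le> sum_mset (P :: nat multiset)"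
  by (induction P) auto

lemma finite_bounded_partitions:
  fixes A :: "nat set"
  assumes "0 \<notin> A"
  shows "finite {P. set_mset P \<subseteq> A \<and> sum_mset P \<le> n}"
proof (rule finite_subset)
  show "{P. set_mset P \<subseteq> A \<and> sum_mset P \<le> n} \<subseteq> (\<Union>k\<le>n. multisets_of_size {..n} k)"
  proof clarify
    fix P assume P: "set_mset P \<subseteq> A" "sum_mset P \<le> n"
    have "0 \<notin># P"
      using P(1) assms by blast
    then have "size P \<le> n"
      using P(2) size_le_sum_mset[of P] by linarith
    moreover have "set_mset P \<subseteq> {..n}"
      using P by (auto dest!: multi_member_split)
    ultimately show "P \<in> (\<Union>k\<le>n. multisets_of_size {..n} k)"
      by (auto simp: multisets_of_size_def)
  qed
qed auto

lemma finite_partitions: "0 \<notin> A \<Longrightarrow> finite (partitions A n)"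
  by (rule finite_subset[OF _ finite_bounded_partitions[of A n]]) (auto simp: partitions_def)

lemma finite_partition_pairs: "0 \<notin> A \<Longrightarrow> finite (partition_pairs A n)"
  by (rule finite_subset[of _ "{P. set_mset P \<subseteq> A \<and> sum_mset P \<le> n}
                               \<times> {P. set_mset P \<subseteq> A \<and> sum_mset P \<le> n}"])
     (auto simp: partition_pairs_def finite_bounded_partitions)

lemma partitions_0: "0 \<notin> A \<Longrightarrow> partitions A 0 = {{#}}"
  by (auto simp: partitions_def) (metis multiset_nonemptyE subsetD)

lemma b_col_1_eq_card_partitions:
  "b_col 1 l m n = card (partitions (nondivisible_parts l m) n)"
proof -
  have "bij_betw (image_mset fst) (colored_parts_set 1 l m n) (partitions (nondivisible_parts l m) n)"
  proof (rule bij_betw_byWitness[where f' = "image_mset (\<lambda>a. (a, 0))"])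
    show "\<forall>P\<in>colored_parts_set 1 l m n. image_mset (\<lambda>a. (a, 0)) (image_mset fst P) = P"
      by (auto simp: colored_parts_set_def multiset.map_comp o_def intro!: image_mset_eq_self)
  qed (auto simp: colored_parts_set_def partitions_def nondivisible_parts_def multiset.map_comp o_def)
  then show ?thesis
    unfolding b_col_def by (rule bij_betw_same_card)
qed

lemma b_col_2_eq_card_partition_pairs:
  "b_col 2 l m n = card (partition_pairs (nondivisible_parts l m) n)"
proof -
  let ?split = "\<lambda>P. (image_mset fst {#x \<in># P. snd x = 0#}, image_mset fst {#x \<in># P. snd x \<noteq> 0#})"
  let ?colour = "\<lambda>(P, Q). image_mset (\<lambda>a. (a, 0)) P + image_mset (\<lambda>a. (a, 1)) Q"
  have "bij_betw ?split (colored_parts_set 2 l m n) (partition_pairs (nondivisible_parts l m) n)"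
  proof (rule bij_betw_byWitness[where f' = ?colour])
    show "\<forall>P\<in>colored_parts_set 2 l m n. ?colour (?split P) = P"
    proof
      fix P assume P: "P \<in> colored_parts_set 2 l m n"
      have "image_mset (\<lambda>a. (a, 0)) (image_mset fst {#x \<in># P. snd x = 0#}) = {#x \<in># P. snd x = 0#}"
        by (auto simp: multiset.map_comp o_def intro!: image_mset_eq_self)
      moreover have "image_mset (\<lambda>a. (a, 1)) (image_mset fst {#x \<in># P. snd x \<noteq> 0#})
                     = {#x \<in># P. snd x \<noteq> 0#}"
        using P by (force simp: colored_parts_set_def multiset.map_comp o_def intro!: image_mset_eq_self)
      ultimately show "?colour (?split P) = P"
        using multiset_partition[of P "\<lambda>x. snd x = 0"] by simp
    qed
    show "?split ` colored_parts_set 2 l m n \<subseteq> partition_pairs (nondivisible_parts l m) n"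
    proof clarify
      fix P assume P: "P \<in> colored_parts_set 2 l m n"
      have "sum_mset (image_mset fst {#x \<in># P. snd x = 0#})
              + sum_mset (image_mset fst {#x \<in># P. snd x \<noteq> 0#}) = sum_mset (image_mset fst P)"
        by (metis image_mset_union multiset_partition sum_mset.union)
      with P show "?split P \<in> partition_pairs (nondivisible_parts l m) n"
        by (auto simp: colored_parts_set_def partition_pairs_def nondivisible_parts_def)
    qed
  qed (auto simp: colored_parts_set_def partition_pairs_def nondivisible_parts_def
                  filter_mset_image_mset multiset.map_comp o_def)
  then show ?thesis
    unfolding b_col_def by (rule bij_betw_same_card)
qed

lemma disjoint_partition_pairs_subset: "disjoint_partition_pairs A n \<subseteq> partition_pairs A n"
  by (auto simp: disjoint_partition_pairs_def)

lemma card_partition_pairs_eq_sum_common_part: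
  fixes A :: "nat set"
  assumes "0 \<notin> A"
  shows "card (partition_pairs A N) =
           (\<Sum>k\<le>N div 2. card (partitions A k) * card (disjoint_partition_pairs A (N - 2 * k)))"
proof -
  let ?T = "SIGMA k:{..N div 2}. partitions A k \<times> disjoint_partition_pairs A (N - 2 * k)"
  let ?common = "\<lambda>(P, Q). (sum_mset (P \<inter># Q), P \<inter># Q, P - Q, Q - P)"
  let ?join = "\<lambda>(k, D, R, S). (D + R, D + S)"
  have "bij_betw ?common (partition_pairs A N) ?T"
  proof (rule bij_betw_byWitness[where f' = ?join])
    show "\<forall>x\<in>partition_pairs A N. ?join (?common x) = x"
      by (auto simp: multiset_eq_iff)
    show "\<forall>y\<in>?T. ?common (?join y) = y"
    proof (rule ballI, unfold split_paired_all)
      fix k D R S assume "(k, D, R, S) \<in> ?T"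
      then have k: "sum_mset D = k" and disjoint: "count R x = 0 \<or> count S x = 0" for x
        by (auto simp: partitions_def disjoint_partition_pairs_def not_in_iff[symmetric])
      have "count ((D + R) \<inter># (D + S)) x = count D x" "count (D + R - (D + S)) x = count R x"
           "count (D + S - (D + R)) x = count S x" for x
        using disjoint[of x] by auto
      then have "(D + R) \<inter># (D + S) = D" "D + R - (D + S) = R" "D + S - (D + R) = S"
        by (simp_all add: multiset_eq_iff)
      with k show "?common (?join (k, D, R, S)) = (k, D, R, S)"
        by simp
    qed
    show "?common ` partition_pairs A N \<subseteq> ?T"
    proof (rule image_subsetI, unfold split_paired_all)
      fix P Q assume "(P, Q) \<in> partition_pairs A N"
      then have PQ: "set_mset P \<subseteq> A" "set_mset Q \<subseteq> A" "sum_mset P + sum_mset Q = N"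
        by (auto simp: partition_pairs_def)
      have "P = P \<inter># Q + (P - Q)" "Q = P \<inter># Q + (Q - P)"
        by (auto simp: multiset_eq_iff)
      then have "sum_mset P + sum_mset Q = 2 * sum_mset (P \<inter># Q) + (sum_mset (P - Q) + sum_mset (Q - P))"
        by (metis mult_2 sum_mset.union add.assoc add.left_commute)
      with PQ show "?common (P, Q) \<in> ?T"
        by (auto simp: partitions_def disjoint_partition_pairs_def partition_pairs_def in_diff_count
                 dest: in_diffD)
    qed
  qed (auto simp: partitions_def disjoint_partition_pairs_def partition_pairs_def)
  then have "card (partition_pairs A N) = card ?T"
    by (rule bij_betw_same_card)
  also have "\<dots> = (\<Sum>k\<le>N div 2. card (partitions A k) * card (disjoint_partition_pairs A (N - 2 * k)))"
    using finite_partitions[OF assms]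
      finite_subset[OF disjoint_partition_pairs_subset finite_partition_pairs[OF assms]]
    by (simp add: card_cartesian_product)
  finally show ?thesis .
qed

lemma card_disjoint_partition_pairs:
  fixes A :: "nat set"
  assumes "0 \<notin> A"
  shows "card (disjoint_partition_pairs A n) = (\<Sum>R\<in>partitions A n. 2 ^ card (set_mset R))"
proof -
  let ?merge = "\<lambda>(P, Q). (P + Q, set_mset P)"
  let ?select = "\<lambda>(R, X). (filter_mset (\<lambda>x. x \<in> X) R, filter_mset (\<lambda>x. x \<notin> X) R)"
  have "bij_betw ?merge (disjoint_partition_pairs A n) (SIGMA R:partitions A n. Pow (set_mset R))"
  proof (rule bij_betw_byWitness[where f' = ?select])
    show "\<forall>x\<in>disjoint_partition_pairs A n. ?select (?merge x) = x"
    proof (rule ballI, unfold split_paired_all)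
      fix P Q assume "(P, Q) \<in> disjoint_partition_pairs A n"
      then have "set_mset P \<inter> set_mset Q = {}"
        by (simp add: disjoint_partition_pairs_def)
      then show "?select (?merge (P, Q)) = (P, Q)"
        by (auto simp: multiset_eq_iff not_in_iff[symmetric])
    qed
    show "\<forall>y\<in>SIGMA R:partitions A n. Pow (set_mset R). ?merge (?select y) = y"
      by (auto simp: multiset_partition[symmetric])
  qed (auto simp: disjoint_partition_pairs_def partition_pairs_def partitions_def
          simp flip: sum_mset.union)
  then have "card (disjoint_partition_pairs A n) = card (SIGMA R:partitions A n. Pow (set_mset R))"
    by (rule bij_betw_same_card)
  also have "\<dots> = (\<Sum>R\<in>partitions A n. 2 ^ card (set_mset R))"
    using finite_partitions[OF assms] by (simp add: card_Pow)
  finally show ?thesis .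
qed

lemma card_partitions_into_equal_parts:
  fixes A :: "nat set"
  assumes "0 \<notin> A" and "n > 0"
  shows "card {R \<in> partitions A n. card (set_mset R) = 1} = card {a \<in> A. a dvd n}"
proof -
  let ?rep = "\<lambda>a. replicate_mset (n div a) a"
  have pos_quotient: "n div a > 0" if "a \<in> A" "a dvd n" for a
    using that assms by (metis dvd_div_eq_0_iff gr0I)
  have "{R \<in> partitions A n. card (set_mset R) = 1} = ?rep ` {a \<in> A. a dvd n}"
  proof (intro set_eqI iffI)
    fix R assume R: "R \<in> {R \<in> partitions A n. card (set_mset R) = 1}"
    obtain a where a: "set_mset R = {a}"
      using R card_1_singletonE by auto
    then have R_eq: "R = replicate_mset (size R) a"
      by (simp add: set_mset_subset_singletonD)
    have "a \<in> A" "size R * a = n"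
      using R a by (auto simp: partitions_def) (metis R_eq sum_mset_replicate_mset of_nat_id)
    then have "a \<in> A \<and> a dvd n" "size R = n div a"
      using assms(1) by (auto intro: gr0I)
    with R_eq show "R \<in> ?rep ` {a \<in> A. a dvd n}"
      by auto
  next
    fix R assume "R \<in> ?rep ` {a \<in> A. a dvd n}"
    then obtain a where "a \<in> A" "a dvd n" "R = ?rep a"
      by auto
    with pos_quotient show "R \<in> {R \<in> partitions A n. card (set_mset R) = 1}"
      by (auto simp: partitions_def)
  qed
  moreover have "inj_on ?rep {a \<in> A. a dvd n}"
    by (rule inj_on_inverseI[where g = "\<lambda>R. Max (set_mset R)"]) (use pos_quotient in fastforce)
  ultimately show ?thesis
    by (simp add: card_image)
qed

lemma card_disjoint_partition_pairs_mod_4: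
  fixes A :: "nat set"
  assumes "0 \<notin> A" and "n > 0"
  shows "card (disjoint_partition_pairs A n) mod 4 = 2 * card {a \<in> A. a dvd n} mod 4"
proof -
  let ?single = "{R \<in> partitions A n. card (set_mset R) = 1}"
  let ?weight = "\<lambda>R. (2::nat) ^ card (set_mset R)"
  have split: "card (disjoint_partition_pairs A n) =
                 (\<Sum>R\<in>partitions A n - ?single. ?weight R) + (\<Sum>R\<in>?single. ?weight R)"
    using card_disjoint_partition_pairs[OF assms(1)] finite_partitions[OF assms(1)]
    by (simp add: sum.subset_diff[of ?single])
  have single: "(\<Sum>R\<in>?single. ?weight R) = 2 * card {a \<in> A. a dvd n}"
    using card_partitions_into_equal_parts[OF assms] by simp
  have "4 dvd (\<Sum>R\<in>partitions A n - ?single. ?weight R)"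
  proof (rule dvd_sum)
    fix R assume R: "R \<in> partitions A n - ?single"
    with assms(2) have "R \<noteq> {#}" "card (set_mset R) \<noteq> 1"
      by (auto simp: partitions_def)
    then have "2 \<le> card (set_mset R)"
      by (metis One_nat_def card_0_eq finite_set_mset less_2_cases not_le set_mset_eq_empty_iff)
    then show "4 dvd ?weight R"
      using le_imp_power_dvd[of 2 "card (set_mset R)" "2::nat"] by simp
  qed
  then show ?thesis
    unfolding split single by (rule mod_add_dvd_left)
qed

lemma card_partition_pairs_double_mod_4:
  fixes A :: "nat set"
  assumes "0 \<notin> A" and even_divisors: "\<And>k. k > 0 \<Longrightarrow> even (card {a \<in> A. a dvd 2 * k})"
  shows "card (partition_pairs A (2 * n)) mod 4 = card (partitions A n) mod 4"
proof -
  let ?term = "\<lambda>k. card (partitions A k) * card (disjoint_partition_pairs A (2 * n - 2 * k))"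
  have split: "card (partition_pairs A (2 * n)) = (\<Sum>k<n. ?term k) + ?term n"
    using card_partition_pairs_eq_sum_common_part[OF assms(1), of "2 * n"]
    by (simp add: lessThan_Suc_atMost[symmetric])
  have "card (disjoint_partition_pairs A 0) = 1"
    using card_disjoint_partition_pairs[OF assms(1), of 0] partitions_0[OF assms(1)] by simp
  then have last: "?term n = card (partitions A n)"
    by simp
  have "4 dvd (\<Sum>k<n. ?term k)"
  proof (rule dvd_sum)
    fix k assume "k \<in> {..<n}"
    then have "2 * n - 2 * k = 2 * (n - k)" "n - k > 0"
      by auto
    with even_divisors[of "n - k"] card_disjoint_partition_pairs_mod_4[OF assms(1), of "2 * (n - k)"]
    have "4 dvd card (disjoint_partition_pairs A (2 * n - 2 * k))"
      by (auto elim!: evenE)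
    then show "4 dvd ?term k"
      by simp
  qed
  then show ?thesis
    unfolding split last by (rule mod_add_dvd_left)
qed

lemma odd_dvd_double_iff: "odd (a :: nat) \<Longrightarrow> a dvd 2 * k \<longleftrightarrow> a dvd k"
  by (simp add: coprime_dvd_mult_right_iff)

lemma even_card_divisors_nondivisible_parts:
  assumes "odd l" and "k > 0"
  shows "even (card {a \<in> nondivisible_parts l 4. a dvd 2 * k})"
proof -
  let ?odd_divisors = "{a. odd a \<and> \<not> l dvd a \<and> a dvd k}"
  have "{a \<in> nondivisible_parts l 4. a dvd 2 * k} = ?odd_divisors \<union> (*) 2 ` ?odd_divisors"
  proof (intro set_eqI iffI)
    fix a assume a: "a \<in> {a \<in> nondivisible_parts l 4. a dvd 2 * k}"
    show "a \<in> ?odd_divisors \<union> (*) 2 ` ?odd_divisors"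
    proof (cases "odd a")
      case True
      with a show ?thesis
        by (simp add: nondivisible_parts_def odd_dvd_double_iff)
    next
      case False
      then obtain b where "a = 2 * b"
        by blast
      with a have "odd b" "\<not> l dvd b" "b dvd k"
        by (auto simp: nondivisible_parts_def)
      with \<open>a = 2 * b\<close> show ?thesis
        by blast
    qed
  next
    fix a assume "a \<in> ?odd_divisors \<union> (*) 2 ` ?odd_divisors"
    with assms(1) show "a \<in> {a \<in> nondivisible_parts l 4. a dvd 2 * k}"
      by (auto simp: nondivisible_parts_def odd_dvd_double_iff odd_pos)
  qed
  moreover have "finite ?odd_divisors"
    using assms(2) by (auto intro: finite_subset[of _ "{..k}"] dest: dvd_imp_le)
  moreover have "?odd_divisors \<inter> (*) 2 ` ?odd_divisors = {}"
    by auto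
  moreover have "card ((*) 2 ` ?odd_divisors) = card ?odd_divisors"
    by (rule card_image) (simp add: inj_on_def)
  ultimately show ?thesis
    by (simp add: card_Un_disjoint)
qed

theorem mainTheorem3:
  fixes n :: nat
  assumes "n \<ge> 1"
  shows "b_col 2 3 4 (2 * n) mod 4 = b_col 1 3 4 n mod 4"
proof -
  have "card (partition_pairs (nondivisible_parts 3 4) (2 * n)) mod 4
          = card (partitions (nondivisible_parts 3 4) n) mod 4"
    using zero_notin_nondivisible_parts even_card_divisors_nondivisible_parts[of 3]
    by (intro card_partition_pairs_double_mod_4) auto
  then show ?thesis
    unfolding b_col_1_eq_card_partitions b_col_2_eq_card_partition_pairs .
qed

end
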